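(* For every $n\ge1$ there is a bijection from the set of parking functions of size $n$ to the set of forests of rooted labelled unordered trees on the vertex set $\{1,\dots,n\}$ such that the number of increments of the initial cluster during the parking procedure of a parking function equals the number of max-records in the corresponding forest, and, for each $j$, the number of increments of amount $j$ of the initial cluster equals the number of max-record subtrees of size $j$ in the corresponding forest.
   Context: A parking function of size $n$ is a sequence $(s_1,\dots,s_n)\in\{1,\dots,n\}^n$ such that in the following parking procedure all drivers park: there are parking spaces $1,\dots,n$ on a one-way street, initially empty; drivers $1,\dots,n$ arrive in order and driver $k$ parks at the first free space among $s_k,s_k+1,\dots,n$ (if none exists he leaves). At each time of the procedure, the initial cluster is the maximal run of consecutive occupied spaces starting at space $1$ (empty if space $1$ is free); its size is its length. Step $k$ is an increment of the initial cluster of amount $j\ge1$ if the size of the initial cluster after step $k$ exceeds that after step $k-1$ by $j$. In a forest of rooted labelled trees, a max-record is a node whose label is the largest among all labels on the path from the root of its tree component to it; if $r_1,\dots,r_m$ are the max-records, the max-record subtree of $r_i$ is the largest subtree rooted at $r_i$ containing none of the other max-records. *)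

theory Defs
  imports Main
begin

text \<open>A sequence of size n is a list of length n (driver k has preference s!(k-1)).\<close>

definition can_park :: "nat \<Rightarrow> nat set \<Rightarrow> nat \<Rightarrow> bool" where
  "can_park n Occ a \<longleftrightarrow> (\<exists>p. a \<le> p \<and> p \<le> n \<and> p \<notin> Occ)"

definition park_step :: "nat \<Rightarrow> nat set \<Rightarrow> nat \<Rightarrow> nat set" where
  "park_step n Occ a =
     (if can_park n Occ a then insert (LEAST p. a \<le> p \<and> p \<le> n \<and> p \<notin> Occ) Occ else Occ)"

definition occupied :: "nat \<Rightarrow> nat list \<Rightarrow> nat \<Rightarrow> nat set" where
  "occupied n s k = fold (\<lambda>a Occ. park_step n Occ a) (take k s) {}"

definition parking_functions :: "nat \<Rightarrow> nat list set" where
  "parking_functions n =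
     {s. length s = n \<and> (\<forall>a\<in>set s. 1 \<le> a \<and> a \<le> n) \<and>
         (\<forall>k<n. can_park n (occupied n s k) (s ! k))}"

definition init_cluster :: "nat set \<Rightarrow> nat" where
  "init_cluster Occ = (GREATEST m. {1..m} \<subseteq> Occ)"

definition increment :: "nat \<Rightarrow> nat list \<Rightarrow> nat \<Rightarrow> nat" where
  "increment n s k = init_cluster (occupied n s k) - init_cluster (occupied n s (k - 1))"

definition num_increments :: "nat \<Rightarrow> nat list \<Rightarrow> nat" where
  "num_increments n s = card {k \<in> {1..n}. increment n s k \<ge> 1}"

definition num_increments_of :: "nat \<Rightarrow> nat list \<Rightarrow> nat \<Rightarrow> nat" where
  "num_increments_of n s j = card {k \<in> {1..n}. increment n s k = j}"

text \<open>A forest of rooted labelled unordered trees on vertex set {1..n} is encoded by its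
  parent function: par v is the parent of v, or 0 if v is a root; par v = 0 outside {1..n};
  acyclicity: iterating par from any vertex eventually reaches 0.\<close>

definition forests :: "nat \<Rightarrow> (nat \<Rightarrow> nat) set" where
  "forests n = {par. (\<forall>v. v \<notin> {1..n} \<longrightarrow> par v = 0) \<and>
                      (\<forall>v\<in>{1..n}. par v \<le> n) \<and>
                      (\<forall>v\<in>{1..n}. \<exists>k. (par ^^ k) v = 0)}"

definition ancestors :: "(nat \<Rightarrow> nat) \<Rightarrow> nat \<Rightarrow> nat set" where
  "ancestors par v = {(par ^^ k) v | k. k \<ge> 1 \<and> (par ^^ k) v \<noteq> 0}"

definition max_records :: "nat \<Rightarrow> (nat \<Rightarrow> nat) \<Rightarrow> nat set" where
  "max_records n par = {v \<in> {1..n}. \<forall>a \<in> ancestors par v. a \<le> v}"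

definition max_record_subtree :: "nat \<Rightarrow> (nat \<Rightarrow> nat) \<Rightarrow> nat \<Rightarrow> nat set" where
  "max_record_subtree n par r =
     {w \<in> {1..n}. \<exists>k. (par ^^ k) w = r \<and> (\<forall>i<k. (par ^^ i) w \<notin> max_records n par)}"

end

theory Submission
  imports Defs "HOL-Library.Multiset"
begin

text \<open>Both sides decompose recursively in the same way. Hence, by induction on the size, for
  every multiset M the parking functions whose increments of the initial cluster form M and the
  forests whose max-record subtree sizes form M are equinumerous, and a bijection is assembled
  fibre by fibre.

  Split a parking function of size n at its last driver and let c be the size of the initial
  cluster just before. No earlier preference equals c + 1; the earlier preferences \<le> c form a
  parking function of size c, those > c + 1, shifted down by c + 1, form one of size n - 1 - c,
  the last preference is any of 1, ..., c + 1, and the last driver completes the cluster, an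
  increment of n - c.

  Split a forest on V at its largest vertex v, and let T be the subtree below v. Then v is a
  max-record with max-record subtree T, and the other max-records and their subtrees are those of
  the forest on V - T. The forest is recovered from an arbitrary forest on T - {v}, the forest on
  V - T and the parent of v, which is either none or any vertex of V - T.

  With k = |T| - 1 = n - 1 - c, both splittings choose k of n - 1 drivers resp. vertices, an
  object of size k, one of n - k options for the last preference resp. the parent of v, and an
  object of size n - 1 - k with statistics M - {n - c}; by induction the counts agree.\<close>

section \<open>Counting preferences and the initial cluster\<close>

definition count_le :: "nat list \<Rightarrow> nat \<Rightarrow> nat" where
  "count_le t i = length (filter (\<lambda>a. a \<le> i) t)"

lemma count_le_append[simp]: "count_le (xs @ ys) i = count_le xs i + count_le ys i"
  by (simp add: count_le_def)

lemma count_le_Nil[simp]: "count_le [] i = 0"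
  by (simp add: count_le_def)

lemma count_le_Cons: "count_le (a # xs) i = (if a \<le> i then Suc (count_le xs i) else count_le xs i)"
  by (simp add: count_le_def)

lemma count_le_le_length: "count_le t i \<le> length t"
  by (simp add: count_le_def)

lemma count_le_mono: "i \<le> i' \<Longrightarrow> count_le t i \<le> count_le t i'"
  unfolding count_le_def by (induction t) auto

lemma count_le_Suc_less: "Suc c \<in> set t \<Longrightarrow> count_le t c < count_le t (Suc c)"
proof (induction t)
  case Nil then show ?case by simp
next
  case (Cons a t)
  have "count_le t c \<le> count_le t (Suc c)" by (rule count_le_mono) simp
  then show ?case using Cons by (auto simp: count_le_Cons)
qed

lemma count_le_filter_split: "count_le t i = count_le (filter P t) i + count_le (filter (\<lambda>a. \<not> P a) t) i"
  by (induction t) (auto simp: count_le_Cons)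

lemma count_le_filter_below: "i \<le> c \<Longrightarrow> count_le (filter (\<lambda>a. \<not> c < a) t) i = count_le t i"
  by (induction t) (auto simp: count_le_Cons)

lemma count_le_filter_above: "c \<le> i \<Longrightarrow> count_le (filter (\<lambda>a. \<not> c < a) t) i = count_le t c"
  by (induction t) (auto simp: count_le_Cons)

lemma count_le_shift_down:
  "count_le (map (\<lambda>a. a - Suc c) (filter (\<lambda>a. c < a) t)) i + count_le t c = count_le t (i + Suc c)"
  by (induction t) (auto simp: count_le_Cons)

lemma count_le_shift_up:
  "count_le (map (\<lambda>a. a + Suc c) u) i = (if i < Suc c then 0 else count_le u (i - Suc c))"
  by (induction u) (auto simp: count_le_Cons)

lemma count_le_0: "\<forall>a\<in>set t. 1 \<le> a \<Longrightarrow> count_le t 0 = 0"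
  by (induction t) (auto simp: count_le_Cons)

lemma count_le_all: "\<forall>a\<in>set u. a \<le> i \<Longrightarrow> count_le u i = length u"
  by (simp add: count_le_def)

text \<open>covers m t says that the drivers t fill the spaces 1, ..., m, and cluster t is the size of
  the initial cluster after they have parked (see init_cluster_occupied).\<close>

definition covers :: "nat \<Rightarrow> nat list \<Rightarrow> bool" where
  "covers m t \<longleftrightarrow> (\<forall>i\<in>{1..m}. i \<le> count_le t i)"

definition cluster :: "nat list \<Rightarrow> nat" where
  "cluster t = (GREATEST m. covers m t)"

lemma covers_0[simp]: "covers 0 t"
  by (simp add: covers_def)

lemma covers_le_length: "covers m t \<Longrightarrow> m \<le> length t"
proof (cases "m = 0")
  case False
  assume "covers m t"
  then have "m \<le> count_le t m" using False unfolding covers_def by auto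
  then show ?thesis using count_le_le_length[of t m] by linarith
qed simp

lemma cluster_covers: "covers (cluster t) t"
  unfolding cluster_def by (rule GreatestI_nat[of _ 0 "length t"]) (auto intro: covers_le_length)

lemma cluster_max: "covers m t \<Longrightarrow> m \<le> cluster t"
  unfolding cluster_def by (rule Greatest_le_nat[of _ _ "length t"]) (auto intro: covers_le_length)

lemma cluster_eqI: "covers c t \<Longrightarrow> (\<And>m. covers m t \<Longrightarrow> m \<le> c) \<Longrightarrow> cluster t = c"
  using cluster_covers cluster_max le_antisym by blast

lemma count_le_cluster:
  "count_le t (cluster t) = cluster t" "count_le t (Suc (cluster t)) = cluster t"
proof -
  let ?c = "cluster t"
  have "?c \<le> count_le t ?c"
    using cluster_covers[of t] by (cases "?c = 0") (auto simp: covers_def)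
  moreover have "count_le t (Suc ?c) \<le> ?c"
  proof (rule ccontr)
    assume "\<not> count_le t (Suc ?c) \<le> ?c"
    then have "covers (Suc ?c) t" using cluster_covers[of t] by (auto simp: covers_def le_Suc_eq)
    then show False using cluster_max[of "Suc ?c" t] by simp
  qed
  moreover have "count_le t ?c \<le> count_le t (Suc ?c)" by (rule count_le_mono) simp
  ultimately show "count_le t ?c = ?c" "count_le t (Suc ?c) = ?c" by simp_all
qed

lemma Suc_cluster_notin: "Suc (cluster t) \<notin> set t"
  using count_le_Suc_less[of "cluster t" t] count_le_cluster[of t] by auto

section \<open>The parking procedure in terms of counts\<close>

definition park_spot :: "nat \<Rightarrow> nat set \<Rightarrow> nat \<Rightarrow> nat" where
  "park_spot n Occ a = (LEAST p. a \<le> p \<and> p \<le> n \<and> p \<notin> Occ)"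

lemma park_spot:
  assumes "can_park n Occ a"
  shows "a \<le> park_spot n Occ a" "park_spot n Occ a \<le> n" "park_spot n Occ a \<notin> Occ"
    "\<And>q. a \<le> q \<Longrightarrow> q \<le> n \<Longrightarrow> q \<notin> Occ \<Longrightarrow> park_spot n Occ a \<le> q"
proof -
  from assms obtain q where "a \<le> q \<and> q \<le> n \<and> q \<notin> Occ" unfolding can_park_def by blast
  then have "a \<le> park_spot n Occ a \<and> park_spot n Occ a \<le> n \<and> park_spot n Occ a \<notin> Occ"
    unfolding park_spot_def by (rule LeastI)
  then show "a \<le> park_spot n Occ a" "park_spot n Occ a \<le> n" "park_spot n Occ a \<notin> Occ" by auto
  show "\<And>q. a \<le> q \<Longrightarrow> q \<le> n \<Longrightarrow> q \<notin> Occ \<Longrightarrow> park_spot n Occ a \<le> q"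
    unfolding park_spot_def by (simp add: Least_le)
qed

lemma occupied_0[simp]: "occupied n s 0 = {}"
  by (simp add: occupied_def)

lemma occupied_Suc:
  "occupied n s (Suc k) =
     (if k < length s \<and> can_park n (occupied n s k) (s ! k)
      then insert (park_spot n (occupied n s k) (s ! k)) (occupied n s k) else occupied n s k)"
proof (cases "k < length s")
  case True
  then show ?thesis by (simp add: occupied_def take_Suc_conv_app_nth park_step_def park_spot_def)
qed (simp add: occupied_def)

lemma occupied_subset:
  assumes "\<forall>a\<in>set s. 1 \<le> a"
  shows "occupied n s k \<subseteq> {1..n}"
proof (induction k)
  case (Suc k)
  have "1 \<le> s ! k" if "k < length s" using assms that by simp
  then show ?case
    using Suc park_spot(1,2)[of n "occupied n s k" "s ! k"] by (auto simp: occupied_Suc)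
qed simp

lemma card_insert_le_Suc: "card (insert x A) \<le> Suc (card A)"
  by (cases "finite A") (auto simp: card_insert_if)

lemma card_occupied_Suc_le: "card (occupied n s (Suc k)) \<le> Suc (card (occupied n s k))"
  by (simp add: occupied_Suc card_insert_le_Suc)

lemma card_occupied_le: "card (occupied n s k) \<le> k"
proof (induction k)
  case (Suc k)
  then show ?case using card_occupied_Suc_le[of n s k] by simp
qed simp

lemma card_occupied_inter_le: "card (occupied n s k \<inter> {1..i}) \<le> count_le (take k s) i"
proof (induction k)
  case (Suc k)
  let ?O = "occupied n s k" and ?a = "s ! k"
  show ?case
  proof (cases "k < length s \<and> can_park n ?O ?a")
    case True
    let ?p = "park_spot n ?O ?a"
    have occ: "occupied n s (Suc k) = insert ?p ?O"
      and tk: "take (Suc k) s = take k s @ [?a]"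
      using True by (simp_all add: occupied_Suc take_Suc_conv_app_nth)
    show ?thesis
    proof (cases "?p \<le> i")
      case True
      have "card (insert ?p ?O \<inter> {1..i}) \<le> card (insert ?p (?O \<inter> {1..i}))"
        by (intro card_mono) auto
      also have "\<dots> \<le> Suc (card (?O \<inter> {1..i}))" by (rule card_insert_le_Suc)
      moreover have "?a \<le> i" using park_spot(1)[of n ?O ?a] \<open>k < length s \<and> _\<close> True by simp
      ultimately show ?thesis using Suc occ tk by (simp add: count_le_Cons)
    next
      case False
      then have "insert ?p ?O \<inter> {1..i} = ?O \<inter> {1..i}" by auto
      then show ?thesis using Suc occ tk by (simp add: count_le_Cons)
    qed
  next
    case False
    then have "occupied n s (Suc k) = ?O" by (auto simp: occupied_Suc)
    moreover have "count_le (take k s) i \<le> count_le (take (Suc k) s) i"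
      by (cases "k < length s") (simp_all add: take_Suc_conv_app_nth)
    ultimately show ?thesis using Suc by simp
  qed
qed simp

text \<open>A free spot q has received at most as many drivers preferring a spot \<le> q as there are
  occupied spots below q: each of them parked strictly below q.\<close>

lemma count_le_free_spot:
  assumes vals: "\<forall>a\<in>set s. 1 \<le> a" and q: "q \<le> n"
  shows "q \<notin> occupied n s k \<Longrightarrow> count_le (take k s) q \<le> card (occupied n s k \<inter> {1..<q})"
proof (induction k)
  case (Suc k)
  let ?O = "occupied n s k" and ?a = "s ! k"
  have sub: "?O \<subseteq> occupied n s (Suc k)" by (auto simp: occupied_Suc)
  then have IH: "count_le (take k s) q \<le> card (?O \<inter> {1..<q})" using Suc by blast
  show ?case
  proof (cases "k < length s \<and> can_park n ?O ?a")
    case True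
    let ?p = "park_spot n ?O ?a"
    have free: "q \<notin> insert ?p ?O" using Suc.prems True by (simp add: occupied_Suc)
    have mono: "card (?O \<inter> {1..<q}) \<le> card (insert ?p ?O \<inter> {1..<q})" by (intro card_mono) auto
    show ?thesis
    proof (cases "?a \<le> q")
      case a: True
      have "?p < q" using park_spot(4)[of n ?O ?a q] True a q free by fastforce
      moreover have "1 \<le> ?p" using park_spot(1)[of n ?O ?a] True vals by (metis le_trans nth_mem)
      ultimately have "insert ?p ?O \<inter> {1..<q} = insert ?p (?O \<inter> {1..<q})" by auto
      then have "card (insert ?p ?O \<inter> {1..<q}) = Suc (card (?O \<inter> {1..<q}))"
        using park_spot(3)[of n ?O ?a] True by simp
      then show ?thesis using IH True a by (simp add: occupied_Suc take_Suc_conv_app_nth count_le_Cons)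
    next
      case False
      then show ?thesis
        using IH True mono by (simp add: occupied_Suc take_Suc_conv_app_nth count_le_Cons)
    qed
  next
    case False
    then have occ: "occupied n s (Suc k) = ?O" by (auto simp: occupied_Suc)
    then have "k < length s \<Longrightarrow> \<not> ?a \<le> q" using False Suc.prems q by (auto simp: can_park_def)
    then show ?thesis
      using IH occ by (cases "k < length s") (simp_all add: take_Suc_conv_app_nth count_le_Cons)
  qed
qed (simp add: count_le_def)

lemma occupied_covers: "{1..m} \<subseteq> occupied n s k \<Longrightarrow> covers m (take k s)"
  unfolding covers_def
proof
  fix i assume "{1..m} \<subseteq> occupied n s k" "i \<in> {1..m}"
  then have "occupied n s k \<inter> {1..i} = {1..i}" by auto
  then show "i \<le> count_le (take k s) i" using card_occupied_inter_le[of n s k i] by simp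
qed

lemma covers_occupied:
  assumes vals: "\<forall>a\<in>set s. 1 \<le> a" and "covers m (take k s)" "m \<le> n"
  shows "{1..m} \<subseteq> occupied n s k"
proof
  fix q assume q: "q \<in> {1..m}"
  show "q \<in> occupied n s k"
  proof (rule ccontr)
    assume "q \<notin> occupied n s k"
    then have "count_le (take k s) q \<le> card (occupied n s k \<inter> {1..<q})"
      using count_le_free_spot[OF vals] q assms(3) by auto
    also have "\<dots> \<le> card {1..<q}" by (rule card_mono) auto
    also have "\<dots> < q" using q by simp
    moreover have "q \<le> count_le (take k s) q" using assms(2) q unfolding covers_def by blast
    ultimately show False by linarith
  qed
qed

lemma card_occupied_parking:
  assumes "s \<in> parking_functions n" "k \<le> n"
  shows "card (occupied n s k) = k"
  using assms(2)
proof (induction k)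
  case (Suc k)
  have "finite (occupied n s k)"
    using occupied_subset[of s n k] assms(1) finite_subset unfolding parking_functions_def by auto
  moreover have "can_park n (occupied n s k) (s ! k)" "k < length s"
    using assms(1) Suc.prems unfolding parking_functions_def by auto
  ultimately show ?case using Suc park_spot(3) by (simp add: occupied_Suc)
qed simp

lemma parking_functions_iff_covers:
  "parking_functions n = {s. length s = n \<and> (\<forall>a\<in>set s. 1 \<le> a \<and> a \<le> n) \<and> covers n s}"
proof (intro set_eqI iffI)
  fix s assume pf: "s \<in> parking_functions n"
  then have len: "length s = n" and vals: "\<forall>a\<in>set s. 1 \<le> a \<and> a \<le> n"
    unfolding parking_functions_def by auto
  have "occupied n s n = {1..n}"
    using occupied_subset[of s n n] vals card_occupied_parking[OF pf, of n] by (intro card_subset_eq) auto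
  then have "covers n s" using occupied_covers[of n n s n] len by simp
  then show "s \<in> {s. length s = n \<and> (\<forall>a\<in>set s. 1 \<le> a \<and> a \<le> n) \<and> covers n s}"
    using len vals by auto
next
  fix s assume "s \<in> {s. length s = n \<and> (\<forall>a\<in>set s. 1 \<le> a \<and> a \<le> n) \<and> covers n s}"
  then have len: "length s = n" and vals: "\<forall>a\<in>set s. 1 \<le> a \<and> a \<le> n" and cov: "covers n s"
    by auto
  have "can_park n (occupied n s k) (s ! k)" if k: "k < n" for k
  proof (rule ccontr)
    assume stuck: "\<not> can_park n (occupied n s k) (s ! k)"
    have "card (occupied n s m) \<le> m - 1" if "Suc k \<le> m" for m
      using that
    proof (induction m rule: dec_induct)
      case base
      then show ?case using stuck card_occupied_le[of n s k] by (simp add: occupied_Suc)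
    next
      case (step m)
      then show ?case using card_occupied_Suc_le[of n s m] by simp
    qed
    from this[of n] have "card (occupied n s n) < n" using k by linarith
    moreover have "{1..n} \<subseteq> occupied n s n" using covers_occupied[of s n n n] vals cov len by simp
    then have "n \<le> card (occupied n s n)"
      using occupied_subset[of s n n] vals card_mono[of "occupied n s n" "{1..n}"] by fastforce
    ultimately show False by simp
  qed
  then show "s \<in> parking_functions n" using len vals unfolding parking_functions_def by auto
qed

lemma parking_functionsD:
  assumes "s \<in> parking_functions n"
  shows "length s = n" "\<And>a. a \<in> set s \<Longrightarrow> 1 \<le> a" "\<And>a. a \<in> set s \<Longrightarrow> a \<le> n"
    "\<And>i. 1 \<le> i \<Longrightarrow> i \<le> n \<Longrightarrow> i \<le> count_le s i"
  using assms unfolding parking_functions_iff_covers covers_def by auto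

lemma parking_functionsI:
  assumes "length s = n" "\<And>a. a \<in> set s \<Longrightarrow> 1 \<le> a \<and> a \<le> n"
    "\<And>i. 1 \<le> i \<Longrightarrow> i \<le> n \<Longrightarrow> i \<le> count_le s i"
  shows "s \<in> parking_functions n"
  using assms unfolding parking_functions_iff_covers covers_def by auto

lemma finite_parking_functions: "finite (parking_functions n)"
proof -
  have "parking_functions n \<subseteq> {s. set s \<subseteq> {1..n} \<and> length s = n}"
    unfolding parking_functions_def by auto
  then show ?thesis using finite_lists_length_eq[of "{1..n}" n] finite_subset by blast
qed

lemma parking_functions_0: "parking_functions 0 = {[]}"
  unfolding parking_functions_def by (auto simp: can_park_def)

lemma cluster_parking_function:
  assumes pf: "s \<in> parking_functions n" shows "cluster s = n"
proof (rule cluster_eqI)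
  show "covers n s" unfolding covers_def using parking_functionsD(4)[OF pf] by auto
  fix m assume "covers m s" then show "m \<le> n" using covers_le_length parking_functionsD(1)[OF pf] by metis
qed

lemma init_cluster_occupied:
  assumes "\<forall>a\<in>set s. 1 \<le> a" "k \<le> n"
  shows "init_cluster (occupied n s k) = cluster (take k s)"
proof -
  have "({1..m} \<subseteq> occupied n s k) = covers m (take k s)" for m
  proof
    show "{1..m} \<subseteq> occupied n s k \<Longrightarrow> covers m (take k s)" by (rule occupied_covers)
    assume cov: "covers m (take k s)"
    then have "m \<le> n" using covers_le_length[of m "take k s"] assms(2) by simp
    then show "{1..m} \<subseteq> occupied n s k" using covers_occupied[OF assms(1) cov] by blast
  qed
  then show ?thesis unfolding init_cluster_def cluster_def by simp
qed

section \<open>Splitting a parking function at its last driver\<close>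

definition increments :: "nat list \<Rightarrow> nat multiset" where
  "increments t = mset (filter (\<lambda>d. d \<noteq> 0)
     (map (\<lambda>k. cluster (take k t) - cluster (take (k-1) t)) [1..<Suc (length t)]))"

lemma increments_Nil[simp]: "increments [] = {#}" by (simp add: increments_def)

lemma increments_snoc:
  "increments (t @ [a]) = increments t +
     (if cluster (t @ [a]) - cluster t = 0 then {#} else {#cluster (t @ [a]) - cluster t#})"
proof -
  have up: "[1..<Suc (length (t @ [a]))] = [1..<Suc (length t)] @ [Suc (length t)]" by simp
  have m: "map (\<lambda>k. cluster (take k (t @ [a])) - cluster (take (k-1) (t @ [a]))) [1..<Suc (length t)]
        = map (\<lambda>k. cluster (take k t) - cluster (take (k-1) t)) [1..<Suc (length t)]"
    by (rule map_cong) auto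
  show ?thesis unfolding increments_def up map_append m by simp
qed

text \<open>If no driver prefers c + 1 and at most c prefer a space \<le> c, then space c + 1 stays free, so
  drivers preferring a space beyond c never affect the initial cluster.\<close>

lemma cluster_filter_le:
  assumes "Suc c \<notin> set u" "count_le u c \<le> c"
  shows "cluster u = cluster (filter (\<lambda>a. \<not> c < a) u)"
proof -
  let ?f = "filter (\<lambda>a. \<not> c < a) u"
  have "covers m u = covers m ?f" for m
  proof (cases "m \<le> c")
    case True
    then show ?thesis unfolding covers_def using count_le_filter_below[of _ c u] by auto
  next
    case False
    have e: "count_le u (Suc c) = count_le u c" using assms(1) by (induction u) (auto simp: count_le_Cons)
    have "\<not> covers m u"
    proof
      assume "covers m u"
      then have "Suc c \<le> count_le u (Suc c)" using False unfolding covers_def by auto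
      then show False using e assms(2) by simp
    qed
    moreover have "\<not> covers m ?f"
    proof
      assume "covers m ?f"
      then have "Suc c \<le> count_le ?f (Suc c)" using False unfolding covers_def by auto
      then show False using count_le_filter_above[of c "Suc c" u] assms(2) by simp
    qed
    ultimately show ?thesis by simp
  qed
  then show ?thesis unfolding cluster_def by simp
qed

lemma increments_filter_le:
  assumes "Suc c \<notin> set t" "count_le t c \<le> c"
  shows "increments t = increments (filter (\<lambda>a. \<not> c < a) t)"
  using assms
proof (induction t rule: rev_induct)
  case Nil then show ?case by simp
next
  case (snoc a t)
  have h: "Suc c \<notin> set t" "count_le t c \<le> c" using snoc.prems by auto
  note IH = snoc.IH[OF h]
  have c1: "cluster (t @ [a]) = cluster (filter (\<lambda>a. \<not> c < a) (t @ [a]))"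
    by (rule cluster_filter_le) (use snoc.prems in auto)
  have c2: "cluster t = cluster (filter (\<lambda>a. \<not> c < a) t)" by (rule cluster_filter_le[OF h])
  show ?case
  proof (cases "c < a")
    case True
    then show ?thesis using IH c1 c2 by (simp add: increments_snoc)
  next
    case False
    then show ?thesis using IH c1 c2 by (simp add: increments_snoc)
  qed
qed

fun interleave :: "bool list \<Rightarrow> 'a list \<Rightarrow> 'a list \<Rightarrow> 'a list" where
  "interleave [] xs ys = []"
| "interleave (b # bs) xs ys = (if b then hd ys # interleave bs xs (tl ys) else hd xs # interleave bs (tl xs) ys)"

lemma interleave_filter: "interleave (map P t) (filter (\<lambda>a. \<not> P a) t) (filter P t) = t"
  by (induction t) auto

lemma filter_interleave:
  assumes "length xs = length (filter Not bs)" "length ys = length (filter id bs)"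
    "\<forall>y\<in>set ys. P y" "\<forall>x\<in>set xs. \<not> P x"
  shows "map P (interleave bs xs ys) = bs \<and> filter P (interleave bs xs ys) = ys \<and>
         filter (\<lambda>a. \<not> P a) (interleave bs xs ys) = xs"
  using assms
proof (induction bs arbitrary: xs ys)
  case Nil then show ?case by simp
next
  case (Cons b bs)
  show ?case
  proof (cases b)
    case True
    then obtain y ys' where ys: "ys = y # ys'" using Cons.prems by (cases ys) auto
    then show ?thesis using Cons.IH[of xs ys'] Cons.prems True by auto
  next
    case False
    then obtain x xs' where xs: "xs = x # xs'" using Cons.prems by (cases xs) auto
    then show ?thesis using Cons.IH[of xs' ys] Cons.prems False by auto
  qed
qed

lemma filter_le_cluster_parking:
  assumes "\<forall>a\<in>set t. 1 \<le> a"
  shows "filter (\<lambda>a. \<not> cluster t < a) t \<in> parking_functions (cluster t)"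
proof (rule parking_functionsI)
  show "length (filter (\<lambda>a. \<not> cluster t < a) t) = cluster t"
    using count_le_cluster(1)[of t] by (simp add: count_le_def not_less)
  show "\<And>a. a \<in> set (filter (\<lambda>a. \<not> cluster t < a) t) \<Longrightarrow> 1 \<le> a \<and> a \<le> cluster t"
    using assms by auto
  fix i assume "1 \<le> i" "i \<le> cluster t"
  then show "i \<le> count_le (filter (\<lambda>a. \<not> cluster t < a) t) i"
    using cluster_covers[of t] count_le_filter_below[of i "cluster t" t] unfolding covers_def by auto
qed

lemma increments_filter_le_cluster:
  "increments t = increments (filter (\<lambda>a. \<not> cluster t < a) t)"
  using increments_filter_le[OF Suc_cluster_notin] count_le_cluster(1) by simp

lemma parking_split:
  assumes pf: "s \<in> parking_functions n" and n: "1 \<le> n"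
  defines "t \<equiv> butlast s" and "c \<equiv> cluster (butlast s)" and "x \<equiv> last s"
  shows "s = t @ [x]" "length t = n - 1" "c < n" "1 \<le> x" "x \<le> Suc c"
    "filter (\<lambda>a. \<not> c < a) t \<in> parking_functions c"
    "map (\<lambda>a. a - Suc c) (filter (\<lambda>a. c < a) t) \<in> parking_functions (n - 1 - c)"
    "length (filter id (map (\<lambda>a. c < a) t)) = n - 1 - c"
    "increments s = increments (filter (\<lambda>a. \<not> c < a) t) + {#n - c#}"
proof -
  have ct: "c = cluster t" unfolding c_def t_def ..
  have "s \<noteq> []" using parking_functionsD(1)[OF pf] n by auto
  then show st: "s = t @ [x]" unfolding t_def x_def by simp
  have lt: "length t = n - 1" unfolding t_def using parking_functionsD(1)[OF pf] by simp
  then show "length t = n - 1" .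
  have vals: "\<And>a. a \<in> set t \<Longrightarrow> 1 \<le> a \<and> a \<le> n" using parking_functionsD(2,3)[OF pf] st by auto
  show "1 \<le> x" using parking_functionsD(2)[OF pf] st by simp
  have cc: "count_le t c = c" "count_le t (Suc c) = c" unfolding ct by (rule count_le_cluster)+
  show cn: "c < n" using count_le_le_length[of t c] cc lt n by simp
  have "Suc c \<le> count_le s (Suc c)" using parking_functionsD(4)[OF pf, of "Suc c"] cn by simp
  then show "x \<le> Suc c" using cc(2) st by (auto simp: count_le_def split: if_splits)
  show "filter (\<lambda>a. \<not> c < a) t \<in> parking_functions c"
    unfolding ct using vals by (intro filter_le_cluster_parking) auto
  let ?t2 = "map (\<lambda>a. a - Suc c) (filter (\<lambda>a. c < a) t)"
  have "length (filter (\<lambda>a. \<not> c < a) t) = c" using cc(1) by (simp add: count_le_def not_less)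
  then have l2: "length (filter (\<lambda>a. c < a) t) = n - 1 - c"
    using sum_length_filter_compl[of "\<lambda>a. \<not> c < a" t] lt by simp
  then show "length (filter id (map (\<lambda>a. c < a) t)) = n - 1 - c"
    by (simp add: filter_map comp_def)
  show "?t2 \<in> parking_functions (n - 1 - c)"
  proof (rule parking_functionsI)
    show "length ?t2 = n - 1 - c" using l2 by simp
    fix a assume "a \<in> set ?t2"
    then obtain b where b: "b \<in> set t" "c < b" "a = b - Suc c" by auto
    then have "b \<noteq> Suc c" using Suc_cluster_notin[of t] ct by auto
    then show "1 \<le> a \<and> a \<le> n - 1 - c" using b vals[of b] by auto
  next
    fix i assume i: "1 \<le> i" "i \<le> n - 1 - c"
    have "i + Suc c \<le> count_le s (i + Suc c)" using parking_functionsD(4)[OF pf, of "i + Suc c"] i by simp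
    also have "\<dots> \<le> count_le t (i + Suc c) + 1" using st by (simp add: count_le_def)
    finally show "i \<le> count_le ?t2 i" using count_le_shift_down[of c t i] cc by simp
  qed
  have "increments s = increments t + {#n - c#}"
    using st increments_snoc[of t x] cn cluster_parking_function[OF pf] ct by auto
  then show "increments s = increments (filter (\<lambda>a. \<not> c < a) t) + {#n - c#}"
    using increments_filter_le_cluster[of t] ct by simp
qed

lemma count_le_parking_function_above:
  assumes "t \<in> parking_functions c" "c \<le> i"
  shows "count_le t i = c"
  using count_le_all[of t i] parking_functionsD[OF assms(1)] assms(2) by force

lemma count_le_parts:
  assumes below: "filter (\<lambda>a. \<not> c < a) t = t1"
    and above: "filter (\<lambda>a. c < a) t = map (\<lambda>a. a + Suc c) t2"
  shows "count_le t i = count_le t1 i + (if i < Suc c then 0 else count_le t2 (i - Suc c))"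
  using count_le_filter_split[of t i "\<lambda>a. c < a"] count_le_shift_up[of c t2 i] below above by simp

lemma cluster_parts:
  assumes t1: "t1 \<in> parking_functions c" and t2: "\<forall>a\<in>set t2. 1 \<le> a"
    and below: "filter (\<lambda>a. \<not> c < a) t = t1"
    and above: "filter (\<lambda>a. c < a) t = map (\<lambda>a. a + Suc c) t2"
  shows "cluster t = c"
proof (rule cluster_eqI)
  note count = count_le_parts[OF below above]
  show "covers c t"
    using parking_functionsD(4)[OF t1] count unfolding covers_def by force
  fix m assume m: "covers m t"
  show "m \<le> c"
  proof (rule ccontr)
    assume "\<not> m \<le> c"
    then have "Suc c \<le> count_le t (Suc c)" using m unfolding covers_def by auto
    then show False
      using count[of "Suc c"] count_le_parking_function_above[OF t1, of "Suc c"] count_le_0[OF t2]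
      by simp
  qed
qed

lemma append_parking_function:
  assumes t1: "t1 \<in> parking_functions c" and t2: "t2 \<in> parking_functions k"
    and below: "filter (\<lambda>a. \<not> c < a) t = t1"
    and above: "filter (\<lambda>a. c < a) t = map (\<lambda>a. a + Suc c) t2"
    and x: "1 \<le> x" "x \<le> Suc c"
  shows "t @ [x] \<in> parking_functions (Suc (c + k))"
proof (rule parking_functionsI)
  have "set t = set (filter (\<lambda>a. \<not> c < a) t) \<union> set (filter (\<lambda>a. c < a) t)" by auto
  then have "set t = set t1 \<union> (\<lambda>a. a + Suc c) ` set t2" using below above by simp
  then show "1 \<le> a \<and> a \<le> Suc (c + k)" if "a \<in> set (t @ [x])" for a
    using that parking_functionsD(2,3)[OF t1] parking_functionsD(2,3)[OF t2] x by fastforce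
  show "length (t @ [x]) = Suc (c + k)"
    using sum_length_filter_compl[of "\<lambda>a. c < a" t] below above
      parking_functionsD(1)[OF t1] parking_functionsD(1)[OF t2] by simp
  fix i assume i: "1 \<le> i" "i \<le> Suc (c + k)"
  note count = count_le_parts[OF below above, of i]
  show "i \<le> count_le (t @ [x]) i"
  proof (cases "i \<le> c")
    case True
    then show ?thesis using parking_functionsD(4)[OF t1 i(1)] count by simp
  next
    case False
    have "i - Suc c \<le> count_le t2 (i - Suc c)"
      using parking_functionsD(4)[OF t2, of "i - Suc c"] i False by (cases "i = Suc c") auto
    then show ?thesis
      using count count_le_parking_function_above[OF t1, of i] x False by (simp add: count_le_Cons)
  qed
qed

lemma parking_join:
  assumes n: "1 \<le> n" and bs: "length bs = n - 1"
    and t1: "t1 \<in> parking_functions (n - 1 - length (filter id bs))"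
    and t2: "t2 \<in> parking_functions (length (filter id bs))"
    and x: "1 \<le> x" "x \<le> Suc (n - 1 - length (filter id bs))"
  defines "c \<equiv> n - 1 - length (filter id bs)"
  defines "t \<equiv> interleave bs t1 (map (\<lambda>a. a + Suc c) t2)"
  shows "t @ [x] \<in> parking_functions n" "cluster t = c" "map (\<lambda>a. c < a) t = bs"
    "filter (\<lambda>a. \<not> c < a) t = t1" "map (\<lambda>a. a - Suc c) (filter (\<lambda>a. c < a) t) = t2"
    "increments (t @ [x]) = increments t1 + {#n - c#}"
proof -
  have k: "length (filter id bs) \<le> n - 1" using bs length_filter_le[of id bs] by simp
  have "length (filter Not bs) = c"
    using sum_length_filter_compl[of id bs] bs k unfolding c_def by (simp add: comp_def)
  moreover have "\<forall>a\<in>set t1. \<not> c < a"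
    using parking_functionsD(3)[OF t1] unfolding c_def by (simp add: not_less)
  ultimately have parts: "map (\<lambda>a. c < a) t = bs \<and>
      filter (\<lambda>a. c < a) t = map (\<lambda>a. a + Suc c) t2 \<and> filter (\<lambda>a. \<not> c < a) t = t1"
    unfolding t_def using parking_functionsD(1)[OF t1] parking_functionsD(1)[OF t2]
    by (intro filter_interleave) (auto simp: c_def)
  then show "map (\<lambda>a. c < a) t = bs" "filter (\<lambda>a. \<not> c < a) t = t1"
    "map (\<lambda>a. a - Suc c) (filter (\<lambda>a. c < a) t) = t2"
    by (auto simp: comp_def)
  have n_eq: "Suc (c + length (filter id bs)) = n" using k n unfolding c_def by simp
  have t1c: "t1 \<in> parking_functions c" using t1 unfolding c_def .
  have x': "x \<le> Suc c" using x(2) unfolding c_def .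
  show pf: "t @ [x] \<in> parking_functions n"
    using append_parking_function[OF t1c t2 _ _ x(1) x'] parts n_eq by auto
  show cl: "cluster t = c"
    using cluster_parts[OF t1c _ _] parking_functionsD(2)[OF t2] parts by auto
  show "increments (t @ [x]) = increments t1 + {#n - c#}"
    using parking_split(9)[OF pf n] cl parts by simp
qed

lemma map_shift_up_down: "map (\<lambda>a. a + Suc c) (map (\<lambda>a. a - Suc c) (filter (\<lambda>a. c < a) u))
    = filter (\<lambda>a. c < a) u"
  by (induction u) auto

text \<open>A parking function splits into the marks of the earlier drivers preferring a space beyond
  the cluster c, the preferences below c, those beyond (shifted down by c + 1), and the last
  preference; c is recovered as n - 1 minus the number of marks.\<close>

definition parking_parts :: "nat \<Rightarrow> nat multiset \<Rightarrow> (bool list \<times> nat list \<times> nat list \<times> nat) set" where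
  "parking_parts n M = (SIGMA bs:{bs. length bs = n - 1}.
     {t1 \<in> parking_functions (n - 1 - length (filter id bs)).
       increments t1 + {#n - (n - 1 - length (filter id bs))#} = M}
     \<times> parking_functions (length (filter id bs)) \<times> {1..Suc (n - 1 - length (filter id bs))})"

definition split_parking :: "nat list \<Rightarrow> bool list \<times> nat list \<times> nat list \<times> nat" where
  "split_parking s = (let t = butlast s; c = cluster t in
     (map (\<lambda>a. c < a) t, filter (\<lambda>a. \<not> c < a) t,
      map (\<lambda>a. a - Suc c) (filter (\<lambda>a. c < a) t), last s))"

definition join_parking :: "nat \<Rightarrow> bool list \<times> nat list \<times> nat list \<times> nat \<Rightarrow> nat list" where
  "join_parking n = (\<lambda>(bs, t1, t2, x). interleave bs t1
     (map (\<lambda>a. a + Suc (n - 1 - length (filter id bs))) t2) @ [x])"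

lemma join_split_parking:
  assumes pf: "s \<in> parking_functions n" and n: "1 \<le> n"
  shows "join_parking n (split_parking s) = s"
proof -
  let ?t = "butlast s" and ?c = "cluster (butlast s)"
  note F = parking_split[OF pf n]
  have "n - 1 - length (filter id (map (\<lambda>a. ?c < a) ?t)) = ?c" using F(3,8) by simp
  then show ?thesis
    unfolding split_parking_def join_parking_def Let_def
    using map_shift_up_down interleave_filter[of "\<lambda>a. ?c < a" ?t] F(1) by simp
qed

lemma split_parking_parts:
  assumes pf: "s \<in> parking_functions n" and n: "1 \<le> n"
  shows "split_parking s \<in> parking_parts n (increments s)"
proof -
  let ?t = "butlast s" and ?c = "cluster (butlast s)"
  note F = parking_split[OF pf n]
  have "n - 1 - length (filter id (map (\<lambda>a. ?c < a) ?t)) = ?c" using F(3,8) by simp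
  then show ?thesis
    unfolding split_parking_def Let_def parking_parts_def using F(2,4-9) by simp
qed

lemma join_parking_parts:
  assumes y: "y \<in> parking_parts n M" and n: "1 \<le> n"
  shows "split_parking (join_parking n y) = y \<and> join_parking n y \<in> parking_functions n \<and>
    increments (join_parking n y) = M"
proof -
  obtain bs t1 t2 x where y_eq: "y = (bs, t1, t2, x)" and bs: "length bs = n - 1"
    and t1: "t1 \<in> parking_functions (n - 1 - length (filter id bs))"
    and t2: "t2 \<in> parking_functions (length (filter id bs))"
    and x: "1 \<le> x" "x \<le> Suc (n - 1 - length (filter id bs))"
    and M: "increments t1 + {#n - (n - 1 - length (filter id bs))#} = M"
    using y unfolding parking_parts_def by auto
  show ?thesis
    using parking_join[OF n bs t1 t2 x] M
    unfolding y_eq split_parking_def join_parking_def Let_def by simp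
qed

lemma bij_split_parking:
  assumes n: "1 \<le> n"
  shows "bij_betw split_parking {s \<in> parking_functions n. increments s = M} (parking_parts n M)"
proof (rule bij_betw_byWitness[where f' = "join_parking n"])
  show "\<forall>s\<in>{s \<in> parking_functions n. increments s = M}. join_parking n (split_parking s) = s"
    using join_split_parking n by auto
  show "split_parking ` {s \<in> parking_functions n. increments s = M} \<subseteq> parking_parts n M"
    using split_parking_parts n by auto
  show "\<forall>y\<in>parking_parts n M. split_parking (join_parking n y) = y"
    "join_parking n ` parking_parts n M \<subseteq> {s \<in> parking_functions n. increments s = M}"
    using join_parking_parts n by auto
qed

section \<open>Forests on arbitrary vertex sets\<close>

text \<open>The notions of the statement, relativised to a vertex set V not containing 0 (which
  stands for "no parent"), so that they apply to the pieces of a forest.\<close>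

definition forest_on :: "nat set \<Rightarrow> (nat \<Rightarrow> nat) set" where
  "forest_on V = {par. (\<forall>v. v \<notin> V \<longrightarrow> par v = 0) \<and> (\<forall>v\<in>V. par v = 0 \<or> par v \<in> V) \<and>
                       (\<forall>v\<in>V. \<exists>k. (par ^^ k) v = 0)}"

definition records :: "nat set \<Rightarrow> (nat \<Rightarrow> nat) \<Rightarrow> nat set" where
  "records V par = {v \<in> V. \<forall>a \<in> ancestors par v. a \<le> v}"

definition record_subtree :: "nat set \<Rightarrow> (nat \<Rightarrow> nat) \<Rightarrow> nat \<Rightarrow> nat set" where
  "record_subtree V par r = {w \<in> V. \<exists>k. (par ^^ k) w = r \<and> (\<forall>i<k. (par ^^ i) w \<notin> records V par)}"

definition record_sizes :: "nat set \<Rightarrow> (nat \<Rightarrow> nat) \<Rightarrow> nat multiset" where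
  "record_sizes V par = image_mset (\<lambda>r. card (record_subtree V par r)) (mset_set (records V par))"

lemma funpow_agree_on:
  assumes A: "\<forall>w\<in>S. f w = g w \<and> f w \<in> S" and w: "w \<in> S"
  shows "(f ^^ k) w = (g ^^ k) w \<and> (f ^^ k) w \<in> S"
proof (induction k)
  case 0 then show ?case using w by simp
next
  case (Suc k)
  then have "(g ^^ k) w \<in> S" by metis
  then show ?case using A Suc by (metis funpow.simps(2) comp_apply)
qed

lemma forest_onD:
  assumes "par \<in> forest_on V"
  shows "\<And>v. v \<notin> V \<Longrightarrow> par v = 0" "\<And>v. v \<in> V \<Longrightarrow> par v \<in> insert 0 V"
    "\<And>v. v \<in> V \<Longrightarrow> \<exists>k. (par ^^ k) v = 0"
  using assms unfolding forest_on_def by auto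

lemma forest_onI:
  assumes "\<And>v. v \<notin> V \<Longrightarrow> par v = 0" "\<And>v. v \<in> V \<Longrightarrow> par v \<in> insert 0 V"
    "\<And>v. v \<in> V \<Longrightarrow> \<exists>k. (par ^^ k) v = 0"
  shows "par \<in> forest_on V"
  using assms unfolding forest_on_def by auto

lemma finite_forest_on: "finite V \<Longrightarrow> finite (forest_on V)"
proof -
  assume fV: "finite V"
  have "forest_on V \<subseteq> {f. \<forall>x. (x \<in> V \<longrightarrow> f x \<in> insert 0 V) \<and> (x \<notin> V \<longrightarrow> f x = 0)}"
    unfolding forest_on_def by auto
  then show ?thesis using finite_set_of_finite_funs[of V "insert 0 V" 0] fV finite_subset by blast
qed

lemma forest_on_empty: "forest_on {} = {\<lambda>_. 0}"
  unfolding forest_on_def by auto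

lemma record_sizes_empty: "record_sizes {} F = {#}"
  unfolding record_sizes_def records_def by simp

lemma funpow_fixpoint_0: "(par::nat\<Rightarrow>nat) 0 = 0 \<Longrightarrow> (par ^^ k) 0 = 0"
  by (induction k) auto

lemma funpow_zero_mono:
  fixes par :: "nat \<Rightarrow> nat"
  assumes "par 0 = 0" "(par ^^ k) w = 0" "k \<le> k'"
  shows "(par ^^ k') w = 0"
proof -
  have "k' = (k' - k) + k" using assms(3) by simp
  then have "(par ^^ k') w = (par ^^ (k' - k)) ((par ^^ k) w)"
    by (metis funpow_add comp_apply)
  then show ?thesis using assms funpow_fixpoint_0 by simp
qed

context
  fixes V par
  assumes z: "0 \<notin> V" and F: "par \<in> forest_on V"
begin

lemma parent_0: "par 0 = 0" using forest_onD(1)[OF F] z by simp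

lemma funpow_parent_in: "w \<in> insert 0 V \<Longrightarrow> (par ^^ k) w \<in> insert 0 V"
  using funpow_agree_on[of "insert 0 V" par par w k] forest_onD(2)[OF F] parent_0 by auto

lemma forest_acyclic:
  assumes w: "w \<in> V" and k: "k \<ge> 1" and eq: "(par ^^ k) w = w"
  shows False
proof -
  have m: "(par ^^ (k * m)) w = w" for m
  proof (induction m)
    case 0 then show ?case by simp
  next
    case (Suc m)
    have "(par ^^ (k * Suc m)) w = (par ^^ k) ((par ^^ (k * m)) w)"
      by (simp add: funpow_add)
    then show ?case using Suc eq by simp
  qed
  obtain K where K: "(par ^^ K) w = 0" using forest_onD(3)[OF F w] by blast
  have "(par ^^ (k * K)) w = 0" using funpow_zero_mono[OF parent_0 K] k by simp
  then show False using m[of K] w z by simp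
qed

lemma ancestors_subset: "w \<in> V \<Longrightarrow> ancestors par w \<subseteq> V"
proof
  fix a assume w: "w \<in> V" and "a \<in> ancestors par w"
  then obtain k where "a = (par ^^ k) w" "a \<noteq> 0" unfolding ancestors_def by auto
  then show "a \<in> V" using funpow_parent_in[of w k] w by auto
qed

end

section \<open>Splitting a forest at its largest vertex\<close>

definition max_tree :: "nat set \<Rightarrow> (nat \<Rightarrow> nat) \<Rightarrow> nat set" where
  "max_tree V par = {w \<in> V. \<exists>k. (par ^^ k) w = Max V}"

definition rest_forest :: "nat set \<Rightarrow> (nat \<Rightarrow> nat) \<Rightarrow> nat \<Rightarrow> nat" where
  "rest_forest V par = (\<lambda>w. if w \<in> V - max_tree V par then par w else 0)"

definition max_tree_forest :: "nat set \<Rightarrow> (nat \<Rightarrow> nat) \<Rightarrow> nat \<Rightarrow> nat" where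
  "max_tree_forest V par = (\<lambda>w. if w \<in> max_tree V par - {Max V} then
     (if par w = Max V then 0 else par w) else 0)"

definition graft :: "nat set \<Rightarrow> nat set \<Rightarrow> (nat \<Rightarrow> nat) \<Rightarrow> (nat \<Rightarrow> nat) \<Rightarrow> nat \<Rightarrow> nat \<Rightarrow> nat" where
  "graft V W G H p = (\<lambda>w. if w = Max V then p else if w \<in> W then (if G w = 0 then Max V else G w) else H w)"

definition forest_parts :: "nat set \<Rightarrow> nat multiset \<Rightarrow> (nat set \<times> (nat \<Rightarrow> nat) \<times> (nat \<Rightarrow> nat) \<times> nat) set" where
  "forest_parts V M = (SIGMA W:Pow (V - {Max V}). forest_on W \<times>
      {H \<in> forest_on (V - {Max V} - W). record_sizes (V - {Max V} - W) H + {#Suc (card W)#} = M} \<times>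
      insert 0 (V - {Max V} - W))"

definition split_forest :: "nat set \<Rightarrow> (nat \<Rightarrow> nat) \<Rightarrow> nat set \<times> (nat \<Rightarrow> nat) \<times> (nat \<Rightarrow> nat) \<times> nat" where
  "split_forest V par = (max_tree V par - {Max V}, max_tree_forest V par, rest_forest V par, par (Max V))"

definition join_forest :: "nat set \<Rightarrow> nat set \<times> (nat \<Rightarrow> nat) \<times> (nat \<Rightarrow> nat) \<times> nat \<Rightarrow> nat \<Rightarrow> nat" where
  "join_forest V = (\<lambda>(W, G, H, p). graft V W G H p)"

locale forest_max =
  fixes V :: "nat set" and par :: "nat \<Rightarrow> nat"
  assumes z: "0 \<notin> V" and F: "par \<in> forest_on V" and fin: "finite V" and ne: "V \<noteq> {}"
begin

abbreviation "v \<equiv> Max V"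
abbreviation "T \<equiv> max_tree V par"
abbreviation "R \<equiv> V - max_tree V par"

lemma Max_in_V: "v \<in> V" using fin ne by simp

lemma Max_nonzero: "v \<noteq> 0" using Max_in_V z by (metis)

lemma Max_in_max_tree: "v \<in> T" unfolding max_tree_def using Max_in_V by (auto intro: exI[of _ 0])

lemma max_tree_subset: "T \<subseteq> V" unfolding max_tree_def by auto

lemma parent_rest: "w \<in> R \<Longrightarrow> par w \<in> insert 0 R"
proof -
  assume w: "w \<in> R"
  have "par w \<in> insert 0 V" using forest_onD(2)[OF F] w by auto
  moreover have "par w \<notin> T"
  proof
    assume "par w \<in> T"
    then obtain k where "(par ^^ k) (par w) = v" unfolding max_tree_def by auto
    then have "(par ^^ Suc k) w = v" by (simp add: funpow_Suc_right del: funpow.simps)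
    then show False using w unfolding max_tree_def by blast
  qed
  ultimately show ?thesis by auto
qed

lemma parent_max_tree: "w \<in> T \<Longrightarrow> w \<noteq> v \<Longrightarrow> par w \<in> T"
proof -
  assume w: "w \<in> T" "w \<noteq> v"
  then obtain k where k: "(par ^^ k) w = v" unfolding max_tree_def by auto
  then obtain k' where k': "k = Suc k'" using w(2) by (cases k) auto
  have pk: "(par ^^ k') (par w) = v" using k k' by (simp add: funpow_Suc_right del: funpow.simps)
  have "par w \<in> insert 0 V" using forest_onD(2)[OF F] w max_tree_subset by auto
  moreover have "par w \<noteq> 0" using pk funpow_fixpoint_0[of par, OF parent_0[OF z F]] Max_nonzero by metis
  ultimately show ?thesis using pk unfolding max_tree_def by auto
qed

lemma parent_Max: "par v \<in> insert 0 R"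
proof -
  have "par v \<in> insert 0 V" using forest_onD(2)[OF F] Max_in_V by auto
  moreover have "par v \<notin> T"
  proof
    assume "par v \<in> T"
    then obtain k where "(par ^^ k) (par v) = v" unfolding max_tree_def by auto
    moreover have "(par ^^ Suc k) v = (par ^^ k) (par v)" by (simp only: funpow_Suc_right comp_apply)
    ultimately show False using forest_acyclic[OF z F Max_in_V, of "Suc k"] by simp
  qed
  ultimately show ?thesis by auto
qed

lemma rest_forest_agree: "w \<in> insert 0 R \<Longrightarrow> (par ^^ k) w = (rest_forest V par ^^ k) w \<and> (par ^^ k) w \<in> insert 0 R"
  by (rule funpow_agree_on) (use parent_rest parent_0[OF z F] in \<open>auto simp: rest_forest_def\<close>)

lemma rest_forest_forest_on: "rest_forest V par \<in> forest_on R"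
proof (rule forest_onI)
  show "\<And>w. w \<notin> R \<Longrightarrow> rest_forest V par w = 0" by (auto simp: rest_forest_def)
  show "\<And>w. w \<in> R \<Longrightarrow> rest_forest V par w \<in> insert 0 R" using parent_rest by (simp add: rest_forest_def)
  fix w assume w: "w \<in> R"
  obtain k where "(par ^^ k) w = 0" using forest_onD(3)[OF F] w by blast
  then show "\<exists>k. (rest_forest V par ^^ k) w = 0" using rest_forest_agree[of w k] w by auto
qed

lemma max_tree_not_record: "u \<in> T \<Longrightarrow> u \<noteq> v \<Longrightarrow> u \<notin> records V par"
proof
  assume u: "u \<in> T" "u \<noteq> v" "u \<in> records V par"
  then obtain k where k: "(par ^^ k) u = v" unfolding max_tree_def by auto
  then have "k \<ge> 1" using u by (cases k) auto
  then have "v = (par ^^ k) u \<and> k \<ge> 1 \<and> (par ^^ k) u \<noteq> 0" using k Max_nonzero by auto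
  then have "v \<in> ancestors par u" unfolding ancestors_def by blast
  then have "v \<le> u" using u(3) unfolding records_def by auto
  moreover have "u \<le> v" using u max_tree_subset fin by auto
  ultimately show False using u by simp
qed

lemma Max_record: "v \<in> records V par"
  unfolding records_def using ancestors_subset[OF z F Max_in_V] fin Max_in_V by auto

lemma ancestors_rest: "w \<in> R \<Longrightarrow> ancestors par w = ancestors (rest_forest V par) w"
  unfolding ancestors_def using rest_forest_agree by auto

lemma records_split: "records V par = insert v (records R (rest_forest V par))"
proof (intro set_eqI iffI)
  fix w assume w: "w \<in> records V par"
  show "w \<in> insert v (records R (rest_forest V par))"
  proof (cases "w \<in> T")
    case True
    then show ?thesis using max_tree_not_record w by auto
  next
    case False
    then have "w \<in> R" using w unfolding records_def by auto
    then show ?thesis using w ancestors_rest unfolding records_def by auto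
  qed
next
  fix w assume "w \<in> insert v (records R (rest_forest V par))"
  then show "w \<in> records V par" using Max_record ancestors_rest unfolding records_def by auto
qed

lemma record_subtree_Max: "record_subtree V par v = T"
proof (intro set_eqI iffI)
  fix w assume "w \<in> record_subtree V par v"
  then show "w \<in> T" unfolding record_subtree_def max_tree_def by auto
next
  fix w assume w: "w \<in> T"
  then have ex: "\<exists>k. (par ^^ k) w = v" unfolding max_tree_def by auto
  define k where "k = (LEAST k. (par ^^ k) w = v)"
  have kv: "(par ^^ k) w = v" unfolding k_def using ex by (rule LeastI_ex)
  have "(par ^^ i) w \<notin> records V par" if i: "i < k" for i
  proof -
    have ne: "(par ^^ i) w \<noteq> v" using not_less_Least[of i "\<lambda>k. (par ^^ k) w = v"] i unfolding k_def by auto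
    have eq: "(par ^^ (k - i)) ((par ^^ i) w) = v" using kv i
      by (metis funpow_add comp_apply le_add_diff_inverse2 less_imp_le)
    have "(par ^^ i) w \<in> insert 0 V" using funpow_parent_in[OF z F] w max_tree_subset by auto
    moreover have "(par ^^ i) w \<noteq> 0" using eq funpow_fixpoint_0[of par, OF parent_0[OF z F]] Max_nonzero by metis
    ultimately have "(par ^^ i) w \<in> T" using eq unfolding max_tree_def by auto
    then show ?thesis using max_tree_not_record ne by auto
  qed
  then show "w \<in> record_subtree V par v" unfolding record_subtree_def using w max_tree_subset kv by auto
qed

text \<open>A path from a vertex below v to a vertex outside T passes through the max-record v.\<close>
lemma record_subtree_in_rest:
  assumes rR: "r \<in> R" and w: "w \<in> record_subtree V par r"
  shows "w \<in> R"
proof (rule ccontr)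
  obtain k where wV: "w \<in> V" and k: "(par ^^ k) w = r" and nm: "\<forall>i<k. (par ^^ i) w \<notin> records V par"
    using w unfolding record_subtree_def by auto
  assume "w \<notin> R"
  then obtain k0 where k0: "(par ^^ k0) w = v" using wV unfolding max_tree_def by auto
  show False
  proof (cases "k \<le> k0")
    case True
    then have "(par ^^ (k0 - k)) r = v" using k k0
      by (metis funpow_add comp_apply le_add_diff_inverse2)
    then show False using rR unfolding max_tree_def by auto
  next
    case False
    then show False using nm[rule_format, of k0] k0 Max_record by simp
  qed
qed

lemma record_subtree_rest:
  assumes r: "r \<in> records R (rest_forest V par)"
  shows "record_subtree V par r = record_subtree R (rest_forest V par) r"
proof (intro set_eqI iffI)
  fix w assume w: "w \<in> record_subtree V par r"
  then obtain k where k: "(par ^^ k) w = r" and nm: "\<forall>i<k. (par ^^ i) w \<notin> records V par"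
    unfolding record_subtree_def by auto
  have "r \<in> R" using r unfolding records_def by blast
  then have wR: "w \<in> R" using record_subtree_in_rest w by blast
  have ag: "\<And>i. (par ^^ i) w = (rest_forest V par ^^ i) w"
    using rest_forest_agree wR by auto
  have "\<forall>i<k. (rest_forest V par ^^ i) w \<notin> records R (rest_forest V par)"
  proof (intro allI impI)
    fix i assume "i < k"
    then have "(par ^^ i) w \<notin> records V par" using nm by auto
    then show "(rest_forest V par ^^ i) w \<notin> records R (rest_forest V par)" using ag[of i] records_split by auto
  qed
  moreover have "(rest_forest V par ^^ k) w = r" using ag[of k] k by simp
  ultimately show "w \<in> record_subtree R (rest_forest V par) r" unfolding record_subtree_def using wR by blast
next
  fix w assume "w \<in> record_subtree R (rest_forest V par) r"
  then obtain k where w: "w \<in> R" and k: "(rest_forest V par ^^ k) w = r"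
    and nm: "\<forall>i<k. (rest_forest V par ^^ i) w \<notin> records R (rest_forest V par)"
    unfolding record_subtree_def by auto
  have ag: "\<forall>i. (par ^^ i) w = (rest_forest V par ^^ i) w \<and> (par ^^ i) w \<in> insert 0 R"
  proof
    fix i show "(par ^^ i) w = (rest_forest V par ^^ i) w \<and> (par ^^ i) w \<in> insert 0 R"
      using rest_forest_agree[of w i] w by blast
  qed
  have "\<forall>i<k. (par ^^ i) w \<notin> records V par"
  proof (intro allI impI)
    fix i assume "i < k"
    then show "(par ^^ i) w \<notin> records V par" using ag[rule_format, of i] nm records_split Max_in_max_tree Max_nonzero by auto
  qed
  then show "w \<in> record_subtree V par r" unfolding record_subtree_def using w ag k by auto
qed

lemma record_sizes_split: "record_sizes V par = record_sizes R (rest_forest V par) + {#card T#}"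
proof -
  have finR: "finite (records R (rest_forest V par))" using fin unfolding records_def by auto
  have vn: "v \<notin> records R (rest_forest V par)" using Max_in_max_tree unfolding records_def by auto
  have "record_sizes V par = image_mset (\<lambda>r. card (record_subtree V par r)) (mset_set (records R (rest_forest V par)))
      + {#card (record_subtree V par v)#}"
    unfolding record_sizes_def records_split using finR vn by (simp add: mset_set.insert_remove)
  also have "image_mset (\<lambda>r. card (record_subtree V par r)) (mset_set (records R (rest_forest V par)))
       = image_mset (\<lambda>r. card (record_subtree R (rest_forest V par) r))
         (mset_set (records R (rest_forest V par)))"
    by (rule image_mset_cong) (use record_subtree_rest finR in auto)
  finally show ?thesis unfolding record_sizes_def record_subtree_Max .
qed

lemma max_tree_forest_forest_on: "max_tree_forest V par \<in> forest_on (T - {v})"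
proof (rule forest_onI)
  show "\<And>w. w \<notin> T - {v} \<Longrightarrow> max_tree_forest V par w = 0" by (auto simp: max_tree_forest_def)
  show "\<And>w. w \<in> T - {v} \<Longrightarrow> max_tree_forest V par w \<in> insert 0 (T - {v})"
    using parent_max_tree by (auto simp: max_tree_forest_def)
  fix w assume w: "w \<in> T - {v}"
  then have ex: "\<exists>k. (par ^^ k) w = v" unfolding max_tree_def by auto
  define k0 where "k0 = (LEAST k. (par ^^ k) w = v)"
  have k0v: "(par ^^ k0) w = v" unfolding k0_def using ex by (rule LeastI_ex)
  have lt: "i < k0 \<Longrightarrow> (par ^^ i) w \<noteq> v" for i
    using not_less_Least[of i "\<lambda>k. (par ^^ k) w = v"] unfolding k0_def by auto
  have path_below: "i < k0 \<Longrightarrow> (max_tree_forest V par ^^ i) w = (par ^^ i) w \<and> (par ^^ i) w \<in> T - {v}" for i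
  proof (induction i)
    case 0 then show ?case using w by simp
  next
    case (Suc i)
    then have IH: "(max_tree_forest V par ^^ i) w = (par ^^ i) w" "(par ^^ i) w \<in> T - {v}" by auto
    have pT: "par ((par ^^ i) w) \<in> T" using parent_max_tree IH(2) by auto
    have pv: "par ((par ^^ i) w) \<noteq> v" using lt[OF Suc.prems] by simp
    show ?case using IH pT pv by (simp add: max_tree_forest_def)
  qed
  have "k0 \<noteq> 0" using k0v w by (cases k0) auto
  then obtain k1 where k1: "k0 = Suc k1" by (cases k0) auto
  have u: "(max_tree_forest V par ^^ k1) w = (par ^^ k1) w" "(par ^^ k1) w \<in> T - {v}" using path_below[of k1] k1 by auto
  have "par ((par ^^ k1) w) = v" using k0v k1 by simp
  then have "(max_tree_forest V par ^^ k0) w = 0" using u k1 by (simp add: max_tree_forest_def)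
  then show "\<exists>k. (max_tree_forest V par ^^ k) w = 0" by blast
qed

lemma split_forest_parts: "split_forest V par \<in> forest_parts V (record_sizes V par)"
proof -
  have finT: "finite T" using max_tree_subset fin finite_subset by blast
  have cT: "card T = Suc (card (T - {v}))" using card_Suc_Diff1[OF finT Max_in_max_tree] by simp
  have R: "V - {v} - (T - {v}) = R" using Max_in_max_tree by blast
  have "T - {v} \<in> Pow (V - {v})" using max_tree_subset by blast
  moreover have "rest_forest V par \<in> {H \<in> forest_on (V - {v} - (T - {v})).
      record_sizes (V - {v} - (T - {v})) H + {#Suc (card (T - {v}))#} = record_sizes V par}"
    unfolding R using rest_forest_forest_on record_sizes_split cT by simp
  moreover have "par v \<in> insert 0 (V - {v} - (T - {v}))" unfolding R by (rule parent_Max)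
  ultimately show ?thesis
    unfolding split_forest_def forest_parts_def using max_tree_forest_forest_on by blast
qed

lemma graft_split:
  shows "graft V (max_tree V par - {Max V}) (max_tree_forest V par) (rest_forest V par) (par (Max V)) = par"
proof
  fix w
  show "graft V (max_tree V par - {Max V}) (max_tree_forest V par) (rest_forest V par) (par (Max V)) w = par w"
  proof (cases "w \<in> max_tree V par - {Max V}")
    case True
    have "par w \<in> max_tree V par" using parent_max_tree True by blast
    then have "par w \<in> V" using max_tree_subset by blast
    then have "par w \<noteq> 0" using z by metis
    have wv: "w \<noteq> Max V" using True by blast
    show ?thesis
    proof (cases "par w = Max V")
      case True
      then show ?thesis using \<open>w \<in> max_tree V par - {Max V}\<close> wv by (simp add: graft_def max_tree_forest_def)
    next
      case False
      then show ?thesis using \<open>w \<in> max_tree V par - {Max V}\<close> wv \<open>par w \<noteq> 0\<close> by (simp add: graft_def max_tree_forest_def)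
    qed
  next
    case False
    show ?thesis
    proof (cases "w = Max V")
      case True then show ?thesis by (simp add: graft_def)
    next
      case wv: False
      show ?thesis
      proof (cases "w \<in> V")
        case True
        then have "w \<in> V - max_tree V par" using False wv by blast
        then show ?thesis using False wv by (simp add: graft_def rest_forest_def)
      next
        case nV: False
        then have "w \<notin> V - max_tree V par" by blast
        then show ?thesis using False wv nV forest_onD(1)[OF F nV] by (simp add: graft_def rest_forest_def)
      qed
    qed
  qed
qed

end

locale graft_parts =
  fixes V W :: "nat set" and G H :: "nat \<Rightarrow> nat" and p :: nat
  assumes z: "0 \<notin> V" and fin: "finite V" and ne: "V \<noteq> {}"
    and W: "W \<subseteq> V - {Max V}" and G: "G \<in> forest_on W"
    and H: "H \<in> forest_on (V - {Max V} - W)" and p: "p \<in> insert 0 (V - {Max V} - W)"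
begin

abbreviation "v \<equiv> Max V"
abbreviation "R \<equiv> V - {Max V} - W"
abbreviation "P \<equiv> graft V W G H p"

lemma Max_in_V: "v \<in> V" using fin ne by simp

lemma Max_nonzero: "v \<noteq> 0" using Max_in_V z by metis

lemma graft_rest_step: "\<forall>w\<in>insert 0 R. P w = H w \<and> P w \<in> insert 0 R"
proof
  fix w assume w: "w \<in> insert 0 R"
  have PH: "P w = H w" using w Max_nonzero W z unfolding graft_def by auto
  have H0: "H 0 = 0" using forest_onD(1)[OF H] z by blast
  have "w = 0 \<or> w \<in> R" using w by (simp only: insert_iff)
  moreover have "w \<in> R \<Longrightarrow> H w \<in> insert 0 R" using forest_onD(2)[OF H] by blast
  ultimately have "H w \<in> insert 0 R" using H0 by auto
  then show "P w = H w \<and> P w \<in> insert 0 R" using PH by simp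
qed

lemma graft_rest_agree: "w \<in> insert 0 R \<Longrightarrow> (P ^^ k) w = (H ^^ k) w \<and> (P ^^ k) w \<in> insert 0 R"
  by (rule funpow_agree_on[OF graft_rest_step])

lemma graft_reaches_Max: "w \<in> W \<Longrightarrow> \<exists>k. (P ^^ k) w = v"
proof -
  assume w: "w \<in> W"
  have G0: "G 0 = 0" using forest_onD(1)[OF G] W z by auto
  have Gin: "(G ^^ k) w \<in> insert 0 W" for k
    using funpow_agree_on[of "insert 0 W" G G w k] forest_onD(2)[OF G] G0 w by auto
  have ag: "(G ^^ k) w \<noteq> 0 \<Longrightarrow> (P ^^ k) w = (G ^^ k) w" for k
  proof (induction k)
    case 0 then show ?case by simp
  next
    case (Suc k)
    have nz: "(G ^^ k) w \<noteq> 0" using Suc.prems G0 by (metis funpow.simps(2) comp_apply)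
    then have uW: "(G ^^ k) w \<in> W" using Gin[of k] by auto
    have "(P ^^ Suc k) w = P ((G ^^ k) w)" using Suc.IH[OF nz] by simp
    also have "\<dots> = G ((G ^^ k) w)" using uW W Suc.prems unfolding graft_def by auto
    finally show ?case by simp
  qed
  have ex: "\<exists>k. (G ^^ k) w = 0" using forest_onD(3)[OF G w] .
  define K where "K = (LEAST k. (G ^^ k) w = 0)"
  have K0: "(G ^^ K) w = 0" unfolding K_def using ex by (rule LeastI_ex)
  have "K \<noteq> 0" using K0 w W z by (cases K) auto
  then obtain K1 where K1: "K = Suc K1" by (cases K) auto
  have nz: "(G ^^ K1) w \<noteq> 0" using not_less_Least[of K1 "\<lambda>k. (G ^^ k) w = 0"] K1 unfolding K_def by auto
  then have uW: "(G ^^ K1) w \<in> W" using Gin[of K1] by auto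
  have Gu: "G ((G ^^ K1) w) = 0" using K0 K1 by simp
  have "(P ^^ K) w = P ((G ^^ K1) w)" using ag[OF nz] K1 by simp
  also have "\<dots> = v" using uW W Gu unfolding graft_def by auto
  finally show ?thesis by blast
qed

lemma graft_rest_reaches_0: "w \<in> insert 0 R \<Longrightarrow> \<exists>k. (P ^^ k) w = 0"
proof (cases "w = 0")
  case False
  assume w: "w \<in> insert 0 R"
  then obtain k where "(H ^^ k) w = 0" using forest_onD(3)[OF H] False by blast
  then show ?thesis using graft_rest_agree[OF w, of k] by auto
qed (auto intro: exI[of _ 0])

lemma graft_Max_reaches_0: "\<exists>k. (P ^^ k) v = 0"
proof -
  obtain k where "(P ^^ k) p = 0" using graft_rest_reaches_0 p by blast
  moreover have "(P ^^ Suc k) v = (P ^^ k) (P v)" by (simp only: funpow_Suc_right comp_apply)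
  moreover have "P v = p" unfolding graft_def by simp
  ultimately show ?thesis by metis
qed

lemma graft_forest_on: "P \<in> forest_on V"
proof (rule forest_onI)
  show "\<And>w. w \<notin> V \<Longrightarrow> P w = 0" using Max_in_V W forest_onD(1)[OF H] unfolding graft_def by auto
  show "P w \<in> insert 0 V" if w: "w \<in> V" for w
  proof -
    have "G w \<noteq> 0 \<Longrightarrow> w \<in> W \<Longrightarrow> G w \<in> V" using forest_onD(2)[OF G, of w] W by auto
    then show "P w \<in> insert 0 V"
      using p W forest_onD(2)[OF H, of w] Max_in_V w unfolding graft_def by auto
  qed
  fix w assume w: "w \<in> V"
  consider "w = v" | "w \<in> W" | "w \<in> insert 0 R" using w by blast
  then show "\<exists>k. (P ^^ k) w = 0"
  proof cases
    case 2
    obtain k1 where k1: "(P ^^ k1) w = v" using graft_reaches_Max[OF 2] by blast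
    obtain k2 where k2: "(P ^^ k2) v = 0" using graft_Max_reaches_0 by blast
    have "(P ^^ (k2 + k1)) w = 0" using k1 k2 by (simp add: funpow_add)
    then show ?thesis by blast
  qed (use graft_Max_reaches_0 graft_rest_reaches_0 in auto)
qed

lemma max_tree_graft: "max_tree V P = insert v W"
proof (intro set_eqI iffI)
  fix w assume w: "w \<in> max_tree V P"
  then obtain k where k: "(P ^^ k) w = v" and wV: "w \<in> V" unfolding max_tree_def by blast
  show "w \<in> insert v W"
  proof (rule ccontr)
    assume "w \<notin> insert v W"
    then have "w \<in> insert 0 R" using wV by simp
    then have "(P ^^ k) w \<in> insert 0 R" by (rule graft_rest_agree[THEN conjunct2])
    then have "v \<in> insert 0 R" using k by simp
    then show False using Max_nonzero by blast
  qed
next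
  fix w assume w: "w \<in> insert v W"
  show "w \<in> max_tree V P"
  proof (cases "w = v")
    case True
    have "(P ^^ 0) w = v" using True by simp
    then show ?thesis unfolding max_tree_def using Max_in_V True by blast
  next
    case False
    then have wW: "w \<in> W" using w by blast
    then have "w \<in> V" using W by blast
    then show ?thesis unfolding max_tree_def using graft_reaches_Max[OF wW] by blast
  qed
qed

lemma max_tree_graft_Diff: "max_tree V P - {v} = W" using max_tree_graft W by blast

lemma rest_graft: "V - max_tree V P = R" using max_tree_graft W by blast

lemma split_graft: "max_tree_forest V P = G" "rest_forest V P = H" "P v = p"
proof -
  show "max_tree_forest V P = G"
  proof
    fix w
    show "max_tree_forest V P w = G w"
    proof (cases "w \<in> W")
      case True
      have wv: "w \<noteq> v" using True W by blast
      have Pw: "P w = (if G w = 0 then v else G w)" using wv True unfolding graft_def by simp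
      have "G w \<noteq> 0 \<Longrightarrow> G w \<noteq> v" using forest_onD(2)[OF G True] W by auto
      then show ?thesis unfolding max_tree_forest_def max_tree_graft_Diff using True Pw by simp
    next
      case False
      then show ?thesis using forest_onD(1)[OF G False] unfolding max_tree_forest_def max_tree_graft_Diff by simp
    qed
  qed
  show "rest_forest V P = H"
  proof
    fix w
    show "rest_forest V P w = H w"
    proof (cases "w \<in> R")
      case True
      then have "P w = H w" using graft_rest_step by blast
      then show ?thesis unfolding rest_forest_def rest_graft using True by simp
    next
      case False
      have "w \<notin> V - max_tree V P" using False rest_graft by simp
      then have "rest_forest V P w = 0" unfolding rest_forest_def by (simp only: if_False)
      then show ?thesis using forest_onD(1)[OF H False] by simp
    qed
  qed
  show "P v = p" unfolding graft_def by simp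
qed

lemma split_forest_graft: "split_forest V P = (W, G, H, p)"
  using max_tree_graft_Diff split_graft by (simp add: split_forest_def)

lemma record_sizes_graft: "record_sizes V P = record_sizes R H + {#Suc (card W)#}"
proof -
  interpret grafted: forest_max V P by (rule forest_max.intro[OF z graft_forest_on fin ne])
  have "Max V \<notin> W" "finite W" using W fin finite_subset by auto
  then have "card (max_tree V P) = Suc (card W)" unfolding max_tree_graft by simp
  then show ?thesis using grafted.record_sizes_split rest_graft split_graft(2) by simp
qed

end

lemma bij_split_forest:
  assumes z: "0 \<notin> V" and fin: "finite V" and ne: "V \<noteq> {}"
  shows "bij_betw (split_forest V) {par \<in> forest_on V. record_sizes V par = M} (forest_parts V M)"
proof (rule bij_betw_byWitness[where f' = "join_forest V"])
  show "\<forall>par\<in>{par \<in> forest_on V. record_sizes V par = M}. join_forest V (split_forest V par) = par"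
    using forest_max.graft_split[OF forest_max.intro[OF z _ fin ne]]
    by (auto simp: join_forest_def split_forest_def)
  show "split_forest V ` {par \<in> forest_on V. record_sizes V par = M} \<subseteq> forest_parts V M"
    using forest_max.split_forest_parts[OF forest_max.intro[OF z _ fin ne]] by auto
  have parts: "graft_parts V W G H p \<and> record_sizes (V - {Max V} - W) H + {#Suc (card W)#} = M"
    if "(W, G, H, p) \<in> forest_parts V M" for W G H p
    using that z fin ne unfolding forest_parts_def graft_parts_def by auto
  show "\<forall>y\<in>forest_parts V M. split_forest V (join_forest V y) = y"
    using graft_parts.split_forest_graft parts by (auto simp: join_forest_def)
  show "join_forest V ` forest_parts V M \<subseteq> {par \<in> forest_on V. record_sizes V par = M}"
    using graft_parts.graft_forest_on graft_parts.record_sizes_graft parts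
    by (auto simp: join_forest_def)
qed

section \<open>Equinumerous fibres\<close>

lemma bij_betw_fibers:
  assumes fA: "finite A" and fB: "finite B"
    and C: "\<And>y. card {a\<in>A. f a = y} = card {b\<in>B. g b = y}"
  shows "\<exists>h. bij_betw h A B \<and> (\<forall>a\<in>A. g (h a) = f a)"
proof -
  define FA where "FA y = {a\<in>A. f a = y}" for y
  define FB where "FB y = {b\<in>B. g b = y}" for y
  have ex: "\<exists>h. bij_betw h (FA y) (FB y)" for y
    using finite_same_card_bij[of "FA y" "FB y"] fA fB C unfolding FA_def FB_def by auto
  define hy where "hy y = (SOME h. bij_betw h (FA y) (FB y))" for y
  have hy: "bij_betw (hy y) (FA y) (FB y)" for y unfolding hy_def using ex[of y] by (rule someI_ex)
  define h where "h a = hy (f a) a" for a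
  have map: "a \<in> A \<Longrightarrow> h a \<in> B \<and> g (h a) = f a" for a
  proof -
    assume a: "a \<in> A"
    then have "a \<in> FA (f a)" unfolding FA_def by simp
    then have "hy (f a) a \<in> FB (f a)" using hy[of "f a"] bij_betwE by blast
    then show ?thesis unfolding h_def FB_def by simp
  qed
  have inj: "inj_on h A"
  proof
    fix a a' assume a: "a \<in> A" "a' \<in> A" "h a = h a'"
    then have fe: "f a = f a'" using map by metis
    have "a \<in> FA (f a)" "a' \<in> FA (f a)" unfolding FA_def using a fe by auto
    moreover have "hy (f a) a = hy (f a) a'" using a(3) fe unfolding h_def by simp
    ultimately show "a = a'" using hy[of "f a"] unfolding bij_betw_def inj_on_def by blast
  qed
  have surj: "h ` A = B"
  proof
    show "h ` A \<subseteq> B" using map by auto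
    show "B \<subseteq> h ` A"
    proof
      fix b assume b: "b \<in> B"
      then have "b \<in> FB (g b)" unfolding FB_def by simp
      moreover have "hy (g b) ` FA (g b) = FB (g b)" using hy[of "g b"] unfolding bij_betw_def by blast
      ultimately obtain a where a: "a \<in> FA (g b)" "hy (g b) a = b" by (metis imageE)
      then have "a \<in> A" "f a = g b" unfolding FA_def by auto
      then have "h a = b" using a unfolding h_def by simp
      then show "b \<in> h ` A" using \<open>a \<in> A\<close> by blast
    qed
  qed
  show ?thesis using inj surj map unfolding bij_betw_def by blast
qed

lemma card_filter_bij_betw:
  assumes "bij_betw h A B" "\<forall>a\<in>A. g (h a) = f a"
  shows "card {a\<in>A. Q (f a)} = card {b\<in>B. Q (g b)}"
proof -
  have "bij_betw h {a\<in>A. Q (f a)} {b\<in>B. Q (g b)}"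
    using assms unfolding bij_betw_def inj_on_def by (auto simp: image_iff)
  then show ?thesis by (rule bij_betw_same_card)
qed

lemma sum_bool_lists_count:
  "(\<Sum>bs\<in>{bs::bool list. length bs = L}. g (length (filter id bs))) = (\<Sum>S\<in>Pow {..<L}. g (card S))"
proof -
  have b: "bij_betw (\<lambda>bs. {i. i < L \<and> bs ! i}) {bs::bool list. length bs = L} (Pow {..<L})"
  proof (rule bij_betw_byWitness[where f' = "\<lambda>S. map (\<lambda>i. i \<in> S) [0..<L]"])
    show "\<forall>bs\<in>{bs::bool list. length bs = L}. map (\<lambda>i. i \<in> {i. i < L \<and> bs ! i}) [0..<L] = bs"
      by (auto intro: nth_equalityI)
    show "\<forall>S\<in>Pow {..<L}. {i. i < L \<and> map (\<lambda>i. i \<in> S) [0..<L] ! i} = S" by auto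
    show "(\<lambda>bs. {i. i < L \<and> bs ! i}) ` {bs. length bs = L} \<subseteq> Pow {..<L}" by auto
    show "(\<lambda>S. map (\<lambda>i. i \<in> S) [0..<L]) ` Pow {..<L} \<subseteq> {bs. length bs = L}" by auto
  qed
  have "(\<Sum>bs\<in>{bs::bool list. length bs = L}. g (length (filter id bs)))
      = (\<Sum>bs\<in>{bs::bool list. length bs = L}. g (card {i. i < L \<and> bs ! i}))"
    by (rule sum.cong) (auto simp: length_filter_conv_card)
  also have "\<dots> = (\<Sum>S\<in>Pow {..<L}. g (card S))"
    using sum.reindex_bij_betw[OF b, of "\<lambda>S. g (card S)"] by simp
  finally show ?thesis .
qed

lemma sum_Pow_card_cong:
  assumes "finite A" "finite B" "card A = card B"
  shows "(\<Sum>S\<in>Pow A. g (card S)) = (\<Sum>S\<in>Pow B. g (card S))"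
proof -
  obtain f where f: "bij_betw f A B" using finite_same_card_bij assms by blast
  have b: "bij_betw (image f) (Pow A) (Pow B)" by (rule bij_betw_Pow[OF f])
  have "(\<Sum>S\<in>Pow A. g (card S)) = (\<Sum>S\<in>Pow A. g (card (f ` S)))"
  proof (rule sum.cong)
    fix S assume "S \<in> Pow A"
    then have "inj_on f S" using f unfolding bij_betw_def by (auto intro: inj_on_subset)
    then show "g (card S) = g (card (f ` S))" by (simp add: card_image)
  qed simp
  also have "\<dots> = (\<Sum>S\<in>Pow B. g (card S))" using sum.reindex_bij_betw[OF b, of "\<lambda>S. g (card S)"] by simp
  finally show ?thesis .
qed

definition parts_count :: "nat \<Rightarrow> nat multiset \<Rightarrow> nat \<Rightarrow> nat" where
  "parts_count n M k = card {t \<in> parking_functions (n - 1 - k). increments t + {#Suc k#} = M} *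
     (card (parking_functions k) * Suc (n - 1 - k))"

lemma card_parking_fiber:
  assumes n: "1 \<le> n"
  shows "card {s \<in> parking_functions n. increments s = M} =
    (\<Sum>S\<in>Pow {..<n - 1}. parts_count n M (card S))"
proof -
  have finBL: "finite {bs::bool list. length bs = n - 1}"
    using finite_lists_length_eq[of "UNIV :: bool set" "n - 1"] by simp
  have part: "card ({t \<in> parking_functions (n - 1 - length (filter id bs)).
        increments t + {#n - (n - 1 - length (filter id bs))#} = M}
      \<times> parking_functions (length (filter id bs)) \<times> {1..Suc (n - 1 - length (filter id bs))})
    = parts_count n M (length (filter id bs))" if "length bs = n - 1" for bs :: "bool list"
  proof -
    have "n - (n - 1 - length (filter id bs)) = Suc (length (filter id bs))"
      using that n length_filter_le[of id bs] by simp
    then show ?thesis by (simp add: parts_count_def card_cartesian_product)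
  qed
  have "card {s \<in> parking_functions n. increments s = M} = card (parking_parts n M)"
    by (rule bij_betw_same_card[OF bij_split_parking[OF n]])
  also have "\<dots> = (\<Sum>bs\<in>{bs::bool list. length bs = n - 1}. parts_count n M (length (filter id bs)))"
    unfolding parking_parts_def
    by (rule trans[OF card_SigmaI[OF finBL]], simp add: finite_parking_functions,
      rule sum.cong[OF refl], rule part, simp)
  also have "\<dots> = (\<Sum>S\<in>Pow {..<n - 1}. parts_count n M (card S))"
    by (rule sum_bool_lists_count)
  finally show ?thesis .
qed

lemma card_forest_fiber:
  assumes z: "0 \<notin> V" and fin: "finite V" and ne: "V \<noteq> {}"
  shows "card {F \<in> forest_on V. record_sizes V F = M} =
    (\<Sum>W\<in>Pow (V - {Max V}). card (forest_on W) *
       (card {H \<in> forest_on (V - {Max V} - W). record_sizes (V - {Max V} - W) H + {#Suc (card W)#} = M} *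
        card (insert 0 (V - {Max V} - W))))"
    (is "_ = ?sum")
proof -
  have "card {F \<in> forest_on V. record_sizes V F = M} = card (forest_parts V M)"
    by (rule bij_betw_same_card[OF bij_split_forest[OF z fin ne]])
  also have "\<dots> = ?sum"
    unfolding forest_parts_def
    by (subst card_SigmaI) (use fin in \<open>auto simp: card_cartesian_product
      intro!: finite_cartesian_product finite_forest_on intro: finite_subset\<close>)
  finally show ?thesis .
qed

definition equinumerous_fibers :: "nat set \<Rightarrow> bool" where
  "equinumerous_fibers V \<longleftrightarrow> (\<forall>M. card {s \<in> parking_functions (card V). increments s = M} =
                                     card {F \<in> forest_on V. record_sizes V F = M})"

lemma bij_from_equinumerous_fibers:
  assumes "finite V" "0 \<notin> V" "equinumerous_fibers V"
  shows "\<exists>h. bij_betw h (parking_functions (card V)) (forest_on V) \<and>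
            (\<forall>s\<in>parking_functions (card V). record_sizes V (h s) = increments s)"
  by (rule bij_betw_fibers)
    (use assms finite_parking_functions finite_forest_on in \<open>auto simp: equinumerous_fibers_def\<close>)

lemma card_forest_parts_term:
  assumes W: "finite W" "0 \<notin> W" "equinumerous_fibers W"
    and R: "finite R" "0 \<notin> R" "equinumerous_fibers R"
  shows "card (forest_on W) *
      (card {H \<in> forest_on R. record_sizes R H + {#Suc (card W)#} = M} * card (insert 0 R))
    = parts_count (Suc (card W + card R)) M (card W)"
proof -
  obtain hW where "bij_betw hW (parking_functions (card W)) (forest_on W)"
    using bij_from_equinumerous_fibers[OF W] by blast
  then have e1: "card (forest_on W) = card (parking_functions (card W))"
    by (simp add: bij_betw_same_card)
  obtain hR where hR: "bij_betw hR (parking_functions (card R)) (forest_on R)"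
    "\<forall>s\<in>parking_functions (card R). record_sizes R (hR s) = increments s"
    using bij_from_equinumerous_fibers[OF R] by blast
  have e2: "card {H \<in> forest_on R. record_sizes R H + {#Suc (card W)#} = M}
      = card {t \<in> parking_functions (card R). increments t + {#Suc (card W)#} = M}"
    using card_filter_bij_betw[where h = hR and g = "record_sizes R" and f = increments
        and Q = "\<lambda>X. X + {#Suc (card W)#} = M", OF hR] by simp
  have e3: "card (insert 0 R) = Suc (card R)" using R by simp
  show ?thesis unfolding e1 e2 e3 parts_count_def by (simp add: algebra_simps)
qed

lemma equinumerous_fibers:
  "finite V \<Longrightarrow> 0 \<notin> V \<Longrightarrow> equinumerous_fibers V"
proof (induction "card V" arbitrary: V rule: less_induct)
  case less
  note fin = less.prems(1) and z = less.prems(2)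
  show ?case unfolding equinumerous_fibers_def
  proof
    fix M
    show "card {s \<in> parking_functions (card V). increments s = M} =
      card {F \<in> forest_on V. record_sizes V F = M}"
    proof (cases "V = {}")
      case True
      have "{s. s = [] \<and> increments s = M} = (if M = {#} then {[]} else {})" by auto
      moreover have "{F::nat\<Rightarrow>nat. F = (\<lambda>_. 0) \<and> M = {#}} = (if M = {#} then {\<lambda>_. 0} else {})"
        by auto
      ultimately show ?thesis
        using True by (simp add: parking_functions_0 forest_on_empty record_sizes_empty)
    next
      case ne: False
      define v where "v = Max V"
      have n: "1 \<le> card V" using ne fin by (simp add: Suc_leI card_gt_0_iff)
      have cV: "card (V - {v}) = card V - 1" using fin ne unfolding v_def by simp
      have "card {s \<in> parking_functions (card V). increments s = M} =
          (\<Sum>S\<in>Pow {..<card V - 1}. parts_count (card V) M (card S))"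
        by (rule card_parking_fiber[OF n])
      also have "\<dots> = (\<Sum>W\<in>Pow (V - {v}). parts_count (card V) M (card W))"
        by (rule sum_Pow_card_cong) (use fin cV in auto)
      also have "\<dots> = card {F \<in> forest_on V. record_sizes V F = M}"
        unfolding card_forest_fiber[OF z fin ne] v_def[symmetric]
      proof (rule sum.cong)
        fix W assume W: "W \<in> Pow (V - {v})"
        let ?R = "V - {v} - W"
        have finW: "finite W" using W fin finite_subset by auto
        have "card W \<le> card (V - {v})" using W fin by (intro card_mono) auto
        moreover have "card ?R = card (V - {v}) - card W" using W finW by (simp add: card_Diff_subset)
        ultimately have sizes: "card W < card V" "card ?R < card V" "Suc (card W + card ?R) = card V"
          using cV n by linarith+
        have W': "0 \<notin> W" "equinumerous_fibers W" using W z finW less.hyps[OF sizes(1)] by auto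
        have R': "finite ?R" "0 \<notin> ?R" "equinumerous_fibers ?R" using z fin less.hyps[OF sizes(2)] by auto
        show "parts_count (card V) M (card W) = card (forest_on W) *
          (card {H \<in> forest_on ?R. record_sizes ?R H + {#Suc (card W)#} = M} * card (insert 0 ?R))"
          using card_forest_parts_term[OF finW W' R', of M] unfolding sizes(3) by (rule sym)
      qed simp
      finally show ?thesis .
    qed
  qed
qed

section \<open>The statistics on the vertex set {1..n}\<close>

lemma count_image_mset_set: "finite A \<Longrightarrow> count (image_mset f (mset_set A)) b = card {a \<in> A. f a = b}"
proof -
  assume fA: "finite A"
  have "count (image_mset f (mset_set A)) b = (\<Sum>y\<in>f -` {b} \<inter> A. 1)"
    unfolding count_image_mset using fA by (intro sum.cong) auto
  also have "\<dots> = card {a \<in> A. f a = b}" by (simp add: vimage_def Int_def conj_commute)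
  finally show ?thesis .
qed

lemma count_filter_map: "j \<noteq> 0 \<Longrightarrow> count (mset (filter (\<lambda>d. d \<noteq> 0) (map f xs))) j
    = length (filter (\<lambda>k. f k = j) xs)"
  by (induction xs) auto

lemma size_filter_map: "size (mset (filter (\<lambda>d. d \<noteq> 0) (map f xs)))
    = length (filter (\<lambda>k. f k \<noteq> 0) xs)"
  by (simp only: size_mset filter_map) (simp add: comp_def)

lemma length_filter_upt: "length (filter Q [1..<Suc n]) = card {k \<in> {1..n}. Q k}"
proof -
  have "length (filter Q [1..<Suc n]) = card (set (filter Q [1..<Suc n]))"
    by (rule distinct_card[symmetric]) simp
  also have "set (filter Q [1..<Suc n]) = {k \<in> {1..n}. Q k}" by auto
  finally show ?thesis .
qed

lemma increment_counts:
  assumes pf: "s \<in> parking_functions n"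
  shows "num_increments n s = size (increments s)"
    "j \<ge> 1 \<Longrightarrow> num_increments_of n s j = count (increments s) j"
proof -
  have len: "length s = n" using parking_functionsD(1)[OF pf] .
  have vals: "\<forall>a\<in>set s. 1 \<le> a" using parking_functionsD(2)[OF pf] by auto
  define f where "f k = cluster (take k s) - cluster (take (k - 1) s)" for k
  have inc: "k \<in> {1..n} \<Longrightarrow> increment n s k = f k" for k
  proof -
    assume k: "k \<in> {1..n}"
    have "init_cluster (occupied n s k) = cluster (take k s)" using init_cluster_occupied[OF vals, of k n] k len by simp
    moreover have "init_cluster (occupied n s (k - 1)) = cluster (take (k - 1) s)"
      using init_cluster_occupied[OF vals, of "k - 1" n] k len by auto
    ultimately show ?thesis unfolding increment_def f_def by simp
  qed
  have incs_eq: "increments s = mset (filter (\<lambda>d. d \<noteq> 0) (map f [1..<Suc n]))"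
    unfolding increments_def f_def len ..
  have "num_increments n s = card {k \<in> {1..n}. f k \<noteq> 0}"
    unfolding num_increments_def using inc by (intro arg_cong[where f = card]) auto
  then show "num_increments n s = size (increments s)"
    unfolding incs_eq size_filter_map length_filter_upt by simp
  assume j: "j \<ge> 1"
  have "num_increments_of n s j = card {k \<in> {1..n}. f k = j}"
    unfolding num_increments_of_def using inc by (intro arg_cong[where f = card]) auto
  then show "num_increments_of n s j = count (increments s) j"
    unfolding incs_eq using count_filter_map[of j f] j length_filter_upt by simp
qed

lemma forests_eq_forest_on: "forests n = forest_on {1..n}"
  unfolding forests_def forest_on_def by auto

lemma max_records_eq: "max_records n par = records {1..n} par"
  unfolding max_records_def records_def by simp

lemma max_record_subtree_eq: "max_record_subtree n par r = record_subtree {1..n} par r"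
  unfolding max_record_subtree_def record_subtree_def max_records_eq by simp

lemma card_max_records: "card (max_records n par) = size (record_sizes {1..n} par)"
  unfolding record_sizes_def max_records_eq by simp

lemma card_max_record_subtrees_eq:
  "card {r \<in> max_records n par. card (max_record_subtree n par r) = j} =
    count (record_sizes {1..n} par) j"
  unfolding record_sizes_def max_records_eq max_record_subtree_eq
  by (rule count_image_mset_set[symmetric]) (simp add: records_def)

theorem proposition4:
  fixes n :: nat
  assumes "n \<ge> 1"
  shows "\<exists>f. bij_betw f (parking_functions n) (forests n) \<and>
           (\<forall>s \<in> parking_functions n.
              num_increments n s = card (max_records n (f s)) \<and>
              (\<forall>j \<ge> 1. num_increments_of n s j =
                 card {r \<in> max_records n (f s). card (max_record_subtree n (f s) r) = j}))"
proof -
  have fin: "finite {1..n}" and z: "0 \<notin> {1..n::nat}" by auto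
  obtain h where h: "bij_betw h (parking_functions n) (forests n)"
    and stats: "\<And>s. s \<in> parking_functions n \<Longrightarrow> record_sizes {1..n} (h s) = increments s"
    using bij_from_equinumerous_fibers[OF fin z equinumerous_fibers[OF fin z]]
    by (auto simp: forests_eq_forest_on)
  show ?thesis
  proof (intro exI conjI ballI allI impI)
    show "bij_betw h (parking_functions n) (forests n)" by (rule h)
    fix s assume s: "s \<in> parking_functions n"
    show "num_increments n s = card (max_records n (h s))"
      using increment_counts(1)[OF s] card_max_records[of n "h s"] stats[OF s] by simp
    fix j :: nat assume "j \<ge> 1"
    then show "num_increments_of n s j =
        card {r \<in> max_records n (h s). card (max_record_subtree n (h s) r) = j}"
      using increment_counts(2)[OF s] card_max_record_subtrees_eq[of n "h s" j] stats[OF s] by simp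
  qed
qed

end
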